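(* Consider instances with indivisible items. There is no (possibly randomized) mechanism $M$ that is individually rational, truthful in expectation and budget feasible in expectation, together with constants $\alpha>1-1/e$ and $\theta_0>0$, such that on every instance with $c_{\max}/B\le\theta_0$ the expected utility of $M$ is at least $\alpha U^\star$. That is, no such mechanism achieves a (large-market) approximation ratio better than $1-1/e$.
   Context: A buyer with budget $B>0$ faces a finite set $S$ of sellers; seller $i$ owns one indivisible item giving the buyer utility $u_i>0$ and has a private cost $c_i\ge0$; $c_{\max}=\max_i c_i$. $U^\star=\max\{\sum_{i\in T}u_i: T\subseteq S,\ \sum_{i\in T}c_i\le B\}$. A randomized mechanism maps the reported cost vector to a random set of winners $W\subseteq S$ and random payments $p_i\ge0$. It is truthful in expectation if for every seller $i$, every true cost $c_i$, every report $\bar c_i$ and every reports $c_{-i}$ of the others, $\mathbb E[p_i-c_i\mathbf 1[i\in W]]$ under report $(\bar c_i,c_{-i})$ is at most its value under $(c_i,c_{-i})$; individually rational in expectation if $\mathbb E[p_i]\ge c_i\Pr[i\in W]$ under truthful reports; budget feasible in expectation if $\mathbb E[\sum_i p_i]\le B$. Its utility is $\sum_{i\in W}u_i$. *)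

theory Defs
  imports "HOL-Probability.Probability"
begin

text \<open>An outcome is a winner set together with a payment
vector. A randomized mechanism maps (B, S, u, reported costs) to a distribution of outcomes.\<close>

type_synonym outcome = "nat set \<times> (nat \<Rightarrow> real)"
type_synonym mechanism = "real \<Rightarrow> nat set \<Rightarrow> (nat \<Rightarrow> real) \<Rightarrow> (nat \<Rightarrow> real) \<Rightarrow> outcome pmf"

definition valid_instance :: "real \<Rightarrow> nat set \<Rightarrow> (nat \<Rightarrow> real) \<Rightarrow> (nat \<Rightarrow> real) \<Rightarrow> bool" where
  "valid_instance B S u c \<longleftrightarrow> B > 0 \<and> finite S \<and> (\<forall>i\<in>S. u i > 0) \<and> (\<forall>i\<in>S. c i \<ge> 0)"

text \<open>Expected payment to seller i (payments are nonnegative, so the nonnegative integral is used).\<close>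
definition exp_pay :: "outcome pmf \<Rightarrow> nat \<Rightarrow> ennreal" where
  "exp_pay D i = (\<integral>\<^sup>+ \<omega>. ennreal (snd \<omega> i) \<partial>measure_pmf D)"

definition win_prob :: "outcome pmf \<Rightarrow> nat \<Rightarrow> ennreal" where
  "win_prob D i = emeasure (measure_pmf D) {\<omega>. i \<in> fst \<omega>}"

definition exp_total_pay :: "outcome pmf \<Rightarrow> nat set \<Rightarrow> ennreal" where
  "exp_total_pay D S = (\<integral>\<^sup>+ \<omega>. ennreal (\<Sum>i\<in>S. snd \<omega> i) \<partial>measure_pmf D)"

definition exp_utility :: "outcome pmf \<Rightarrow> (nat \<Rightarrow> real) \<Rightarrow> ennreal" where
  "exp_utility D u = (\<integral>\<^sup>+ \<omega>. ennreal (\<Sum>i\<in>fst \<omega>. u i) \<partial>measure_pmf D)"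

definition well_formed :: "mechanism \<Rightarrow> bool" where
  "well_formed M \<longleftrightarrow> (\<forall>B S u c. valid_instance B S u c \<longrightarrow>
      (\<forall>\<omega>\<in>set_pmf (M B S u c). fst \<omega> \<subseteq> S \<and> (\<forall>i. snd \<omega> i \<ge> 0)))"

definition individually_rational :: "mechanism \<Rightarrow> bool" where
  "individually_rational M \<longleftrightarrow> (\<forall>B S u c. valid_instance B S u c \<longrightarrow>
      (\<forall>i\<in>S. ennreal (c i) * win_prob (M B S u c) i \<le> exp_pay (M B S u c) i))"

text \<open>Truthful in expectation: E[p_i - c_i 1[i\<in>W]] under misreport cb is at most that under
truthful report c_i; rearranged to avoid subtraction (all quantities are finite by budget
feasibility).\<close>
definition truthful_in_expectation :: "mechanism \<Rightarrow> bool" where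
  "truthful_in_expectation M \<longleftrightarrow> (\<forall>B S u c i cb. valid_instance B S u c \<longrightarrow> i \<in> S \<longrightarrow> cb \<ge> 0 \<longrightarrow>
      exp_pay (M B S u (c(i := cb))) i + ennreal (c i) * win_prob (M B S u c) i
      \<le> exp_pay (M B S u c) i + ennreal (c i) * win_prob (M B S u (c(i := cb))) i)"

definition budget_feasible_in_expectation :: "mechanism \<Rightarrow> bool" where
  "budget_feasible_in_expectation M \<longleftrightarrow> (\<forall>B S u c. valid_instance B S u c \<longrightarrow>
      exp_total_pay (M B S u c) S \<le> ennreal B)"

definition opt_utility :: "real \<Rightarrow> nat set \<Rightarrow> (nat \<Rightarrow> real) \<Rightarrow> (nat \<Rightarrow> real) \<Rightarrow> real" where
  "opt_utility B S u c = Max {(\<Sum>i\<in>T. u i) | T. T \<subseteq> S \<and> (\<Sum>i\<in>T. c i) \<le> B}"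

definition c_max :: "nat set \<Rightarrow> (nat \<Rightarrow> real) \<Rightarrow> real" where
  "c_max S c = Max (c ` S)"

end

theory Submission
  imports Defs
begin

text \<open>Yao-style argument. Give \<open>n\<close> sellers unit utility and independent costs
\<open>1 - (1 - 1/m)\<^sup>l\<close>, where the level \<open>l \<in> {0..m}\<close> is \<open>0\<close> with probability \<open>(1 - 1/m)\<^sup>m\<close>
and \<open>l \<ge> 1\<close> with probability \<open>(1 - 1/m)\<^sup>m\<^sup>-\<^sup>l / m\<close>; let the budget exceed the
expected total cost by \<open>n\<delta>\<close>. Truthfulness between adjacent levels and individual
rationality at the top level give a discrete Myerson bound on payments, and for this
distribution it says that the expected payment to a seller is at least its probability of
winning minus \<open>(1 - 1/m)\<^sup>m \<approx> 1/e\<close>. Budget feasibility therefore caps the expected number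
of winners at about \<open>n (1 - 1/e + \<delta>)\<close>. By Chebyshev's inequality the total cost is within
budget except with probability \<open>O(1/(n\<delta>\<^sup>2))\<close>, so the expected optimum is
\<open>n - O(1/\<delta>\<^sup>2)\<close>, while \<open>c\<^sub>m\<^sub>a\<^sub>x/B = O(1/(n\<delta>))\<close> tends to \<open>0\<close> as \<open>n\<close> grows.\<close>

definition pi_expect :: "(nat \<Rightarrow> real) \<Rightarrow> nat set \<Rightarrow> nat set \<Rightarrow> ((nat \<Rightarrow> nat) \<Rightarrow> real) \<Rightarrow> real" where
  "pi_expect p S L f = (\<Sum>g\<in>PiE S (\<lambda>_. L). (\<Prod>i\<in>S. p (g i)) * f g)"

lemma pi_expect_remove:
  assumes "finite S" "i \<in> S"
  shows "pi_expect p S L f = pi_expect p (S - {i}) L (\<lambda>g. \<Sum>v\<in>L. p v * f (g(i := v)))"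
proof -
  let ?S' = "S - {i}"
  let ?w = "\<lambda>g. \<Prod>j\<in>?S'. p (g j)"
  have weight: "(\<Prod>j\<in>S. p (if j = i then v else g j)) = p v * ?w g" for g v
  proof -
    have "(\<Prod>j\<in>S. p (if j = i then v else g j))
        = p v * (\<Prod>j\<in>?S'. p (if j = i then v else g j))"
      using assms by (simp add: prod.remove)
    also have "(\<Prod>j\<in>?S'. p (if j = i then v else g j)) = ?w g"
      by (intro prod.cong) auto
    finally show ?thesis .
  qed
  have "pi_expect p S L f
      = (\<Sum>(v, g)\<in>L \<times> PiE ?S' (\<lambda>_. L). (\<Prod>j\<in>S. p ((g(i := v)) j)) * f (g(i := v)))"
    unfolding pi_expect_def using assms inj_combinator[of i ?S' "\<lambda>_. L"]
    by (subst insert_Diff[OF assms(2), symmetric], subst PiE_insert_eq)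
       (simp add: sum.reindex split_def)
  also have "\<dots> = (\<Sum>v\<in>L. \<Sum>g\<in>PiE ?S' (\<lambda>_. L). ?w g * (p v * f (g(i := v))))"
    by (simp add: sum.cartesian_product weight mult_ac)
  also have "\<dots> = pi_expect p ?S' L (\<lambda>g. \<Sum>v\<in>L. p v * f (g(i := v)))"
    unfolding pi_expect_def by (subst sum.swap) (simp add: sum_distrib_left)
  finally show ?thesis .
qed

lemma pi_expect_const:
  assumes "finite S" "finite L" "sum p L = 1"
  shows "pi_expect p S L (\<lambda>_. c) = c"
proof -
  have "(\<Prod>i\<in>S. \<Sum>v\<in>L. p v) = (\<Sum>g\<in>PiE S (\<lambda>_. L). \<Prod>i\<in>S. p (g i))"
    by (rule prod_sum_PiE) (use assms in auto)
  then show ?thesis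
    using assms unfolding pi_expect_def by (simp flip: sum_distrib_right)
qed

lemma pi_expect_mono:
  assumes "\<And>v. 0 \<le> p v" "\<And>g. g \<in> PiE S (\<lambda>_. L) \<Longrightarrow> f g \<le> h g"
  shows "pi_expect p S L f \<le> pi_expect p S L h"
  unfolding pi_expect_def using assms by (intro sum_mono mult_left_mono prod_nonneg) auto

lemma pi_expect_sum:
  "pi_expect p S L (\<lambda>g. \<Sum>i\<in>I. f i g) = (\<Sum>i\<in>I. pi_expect p S L (f i))"
  unfolding pi_expect_def by (simp add: sum_distrib_left sum.swap[of _ "PiE S (\<lambda>_. L)"])

lemma pi_expect_affine:
  assumes "finite S" "finite L" "sum p L = 1"
  shows "pi_expect p S L (\<lambda>g. a + b * f g) = a + b * pi_expect p S L f"
proof -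
  have "pi_expect p S L (\<lambda>g. a + b * f g) = pi_expect p S L (\<lambda>_. a) + b * pi_expect p S L f"
    unfolding pi_expect_def by (simp add: algebra_simps sum.distrib sum_distrib_left)
  then show ?thesis using pi_expect_const[OF assms] by simp
qed

lemma pi_expect_diff_const:
  assumes "finite S" "finite L" "sum p L = 1"
  shows "pi_expect p S L (\<lambda>g. f g - c) = pi_expect p S L f - c"
  using pi_expect_affine[OF assms, of "- c" 1 f] by simp

text \<open>Independence of the coordinates makes the mixed terms vanish, so the variance of the
sum is the sum of the variances.\<close>

lemma pi_expect_sum_deviation_sq_le:
  assumes S: "finite S" and L: "finite L" and p1: "sum p L = 1" and p0: "\<And>v. 0 \<le> p v"
    and \<mu>: "\<mu> = (\<Sum>v\<in>L. p v * f v)" and dev: "\<And>v. v \<in> L \<Longrightarrow> \<bar>f v - \<mu>\<bar> \<le> 1"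
  shows "pi_expect p S L (\<lambda>g. (\<Sum>i\<in>S. f (g i) - \<mu>)\<^sup>2) \<le> card S"
proof -
  let ?Z = "\<lambda>g i. f (g i) - \<mu>"
  have "(\<Sum>v\<in>L. p v * (f v - \<mu>)) = (\<Sum>v\<in>L. p v * f v) - \<mu> * sum p L"
    by (simp add: algebra_simps sum_subtractf sum_distrib_left)
  then have centered: "(\<Sum>v\<in>L. p v * (f v - \<mu>)) = 0"
    using \<mu> p1 by simp
  have mixed: "pi_expect p S L (\<lambda>g. ?Z g i * ?Z g k) = 0" if "i \<in> S" "k \<in> S" "i \<noteq> k" for i k
  proof -
    have "pi_expect p S L (\<lambda>g. ?Z g i * ?Z g k)
        = pi_expect p (S - {i}) L (\<lambda>g. (\<Sum>v\<in>L. p v * (f v - \<mu>)) * ?Z g k)"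
      unfolding pi_expect_remove[OF S \<open>i \<in> S\<close>] using \<open>i \<noteq> k\<close>
      by (simp add: sum_distrib_left mult_ac)
    then show ?thesis using centered by (simp add: pi_expect_def)
  qed
  have square: "pi_expect p S L (\<lambda>g. ?Z g i * ?Z g i) \<le> 1" if "i \<in> S" for i
  proof -
    have "pi_expect p S L (\<lambda>g. ?Z g i * ?Z g i) \<le> pi_expect p S L (\<lambda>_. 1)"
    proof (rule pi_expect_mono[OF p0])
      fix g assume "g \<in> PiE S (\<lambda>_. L)"
      then have "\<bar>?Z g i\<bar> \<le> 1" using that dev by auto
      then show "?Z g i * ?Z g i \<le> 1"
        by (metis abs_le_square_iff abs_one power2_eq_square power_one)
    qed
    then show ?thesis using pi_expect_const[OF S L p1] by simp
  qed
  have "pi_expect p S L (\<lambda>g. (\<Sum>i\<in>S. ?Z g i)\<^sup>2)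
      = (\<Sum>i\<in>S. \<Sum>k\<in>S. pi_expect p S L (\<lambda>g. ?Z g i * ?Z g k))"
    by (simp add: power2_eq_square sum_product pi_expect_sum)
  also have "\<dots> = (\<Sum>i\<in>S. pi_expect p S L (\<lambda>g. ?Z g i * ?Z g i))"
    using S mixed by (intro sum.cong refl) (simp add: sum.remove[where x=i for i])
  also have "\<dots> \<le> (\<Sum>i\<in>S. 1)" by (intro sum_mono square)
  finally show ?thesis by simp
qed

definition decay :: "nat \<Rightarrow> real" where
  "decay m = 1 - 1 / real m"

definition cost_level :: "nat \<Rightarrow> nat \<Rightarrow> real" where
  "cost_level m l = 1 - decay m ^ l"

definition level_prob :: "nat \<Rightarrow> nat \<Rightarrow> real" where
  "level_prob m l = (if l = 0 then decay m ^ m else decay m ^ (m - l) / real m)"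

definition level_gap :: "nat \<Rightarrow> nat \<Rightarrow> real" where
  "level_gap m l = cost_level m l - cost_level m (l - 1)"

lemma decay_bounds: "m \<ge> 1 \<Longrightarrow> 0 \<le> decay m \<and> decay m \<le> 1"
  unfolding decay_def by (auto simp: field_simps)

lemma cost_level_bounds: "m \<ge> 1 \<Longrightarrow> 0 \<le> cost_level m l \<and> cost_level m l \<le> 1"
  using decay_bounds[of m] unfolding cost_level_def by (auto simp: power_le_one)

lemma level_prob_nonneg: "m \<ge> 1 \<Longrightarrow> 0 \<le> level_prob m l"
  using decay_bounds[of m] unfolding level_prob_def by auto

lemma sum_level_prob_lessThan:
  assumes "m \<ge> 1" "1 \<le> l" "l \<le> Suc m"
  shows "(\<Sum>v<l. level_prob m v) = decay m ^ (Suc m - l)"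
  using assms(2,3)
proof (induction l rule: dec_induct)
  case base
  then show ?case by (simp add: level_prob_def)
next
  case (step l)
  then have "Suc m - l = Suc (m - l)" by simp
  moreover have "decay m ^ Suc k + decay m ^ k / real m = decay m ^ k" for k
    by (simp add: decay_def field_simps)
  ultimately show ?case using step by (simp add: level_prob_def)
qed

lemma sum_level_prob: "m \<ge> 1 \<Longrightarrow> (\<Sum>v\<in>{0..m}. level_prob m v) = 1"
  using sum_level_prob_lessThan[of m "Suc m"] by (simp add: atLeast0AtMost lessThan_Suc_atMost)

lemma level_gap_mult_sum_level_prob:
  assumes "m \<ge> 1" "l \<in> {1..m}"
  shows "level_gap m l * (\<Sum>v<l. level_prob m v) = level_prob m l * decay m ^ l"
proof -
  obtain k where l: "l = Suc k" using assms by (cases l) auto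
  have gap: "level_gap m l = decay m ^ k / real m"
    unfolding level_gap_def cost_level_def l by (simp add: decay_def field_simps)
  have "Suc m - l = m - k" "l \<noteq> 0" using l by auto
  then have "level_gap m l * (\<Sum>v<l. level_prob m v) = decay m ^ k * decay m ^ (m - k) / real m"
    using assms sum_level_prob_lessThan[of m l] by (simp add: gap)
  also have "decay m ^ k * decay m ^ (m - k) = decay m ^ m"
    using assms l by (simp flip: power_add)
  also have "\<dots> = decay m ^ (m - l) * decay m ^ l"
    using assms by (simp flip: power_add)
  finally show ?thesis
    using \<open>l \<noteq> 0\<close> by (simp add: level_prob_def)
qed

lemma expected_cost_level: "m \<ge> 1 \<Longrightarrow> (\<Sum>v\<in>{0..m}. level_prob m v * cost_level m v) = 1 - 2 * decay m ^ m"
proof -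
  assume m: "m \<ge> 1"
  have "level_prob m v * decay m ^ v = decay m ^ m / real m" if "v \<in> {1..m}" for v
  proof -
    have "decay m ^ (m - v) * decay m ^ v = decay m ^ m"
      using that by (simp flip: power_add)
    then show ?thesis using that by (simp add: level_prob_def)
  qed
  then have "(\<Sum>v\<in>{1..m}. level_prob m v * decay m ^ v) = decay m ^ m"
    using m by simp
  moreover have "{0..m} = insert 0 {1..m}" by auto
  ultimately have "(\<Sum>v\<in>{0..m}. level_prob m v * decay m ^ v) = decay m ^ m + decay m ^ m"
    by (simp add: level_prob_def)
  then show ?thesis
    using sum_level_prob[OF m] by (simp add: cost_level_def algebra_simps sum_subtractf)
qed

lemma exists_decay_power_gt:
  assumes "c < exp (- 1)"
  obtains m where "m \<ge> 1" "c < decay m ^ m"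
proof -
  have "(\<lambda>m. decay m ^ m) \<longlonglongrightarrow> exp (- 1)"
    using tendsto_exp_limit_sequentially[of "- 1"] by (simp add: decay_def)
  then have "eventually (\<lambda>m. c < decay m ^ m \<and> m \<ge> 1) sequentially"
    using assms by (intro eventually_conj order_tendstoD(1) eventually_ge_at_top)
  then obtain N where "\<forall>m\<ge>N. c < decay m ^ m \<and> m \<ge> 1"
    unfolding eventually_sequentially by blast
  then show ?thesis
    using that by blast
qed

lemma two_decay_power_le_one:
  assumes "m \<ge> 1"
  shows "2 * decay m ^ m \<le> 1"
proof -
  have "0 \<le> (\<Sum>v\<in>{0..m}. level_prob m v * cost_level m v)"
    using level_prob_nonneg[OF assms] cost_level_bounds[OF assms]
    by (intro sum_nonneg mult_nonneg_nonneg) auto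
  then show ?thesis
    using expected_cost_level[OF assms] by simp
qed

text \<open>A discrete Myerson bound: the truthfulness constraints between adjacent cost levels
telescope down from the top level, where individual rationality applies.\<close>

lemma payment_ge_cost_level_ladder:
  assumes top: "cost_level m m * X m \<le> P m"
    and adjacent: "\<And>j. j < m \<Longrightarrow> P (Suc j) + cost_level m j * X j \<le> P j + cost_level m j * X (Suc j)"
    and "j \<le> m"
  shows "cost_level m j * X j + (\<Sum>l\<in>{Suc j..m}. level_gap m l * X l) \<le> P j"
  using \<open>j \<le> m\<close>
proof (induction j rule: inc_induct)
  case base
  then show ?case using top by simp
next
  case (step j)
  have "(\<Sum>l\<in>{Suc j..m}. level_gap m l * X l)
      = (cost_level m (Suc j) - cost_level m j) * X (Suc j) + (\<Sum>l\<in>{Suc (Suc j)..m}. level_gap m l * X l)"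
    using step.hyps by (simp add: sum.atLeast_Suc_atMost level_gap_def)
  then show ?case
    using step.IH adjacent[OF step.hyps(2)] by (simp add: algebra_simps)
qed

lemma expected_payment_ge_expected_win:
  assumes m: "m \<ge> 1" and "X 0 \<le> 1"
    and top: "cost_level m m * X m \<le> P m"
    and adjacent: "\<And>j. j < m \<Longrightarrow> P (Suc j) + cost_level m j * X j \<le> P j + cost_level m j * X (Suc j)"
  shows "(\<Sum>v\<in>{0..m}. level_prob m v * X v) - level_prob m 0 \<le> (\<Sum>v\<in>{0..m}. level_prob m v * P v)"
proof -
  let ?p = "level_prob m" and ?h = "cost_level m" and ?d = "level_gap m"
  have swap: "(\<Sum>v\<in>{0..m}. ?p v * (\<Sum>l\<in>{Suc v..m}. ?d l * X l))
      = (\<Sum>l\<in>{0..m}. ?d l * X l * (\<Sum>v<l. ?p v))"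
  proof -
    have "(\<Sum>v\<in>{0..m}. ?p v * (\<Sum>l\<in>{Suc v..m}. ?d l * X l))
        = (\<Sum>v\<in>{0..<m}. \<Sum>l\<in>{Suc v..m}. ?d l * X l * ?p v)"
      by (simp add: sum.last_plus sum_distrib_left mult_ac)
    also have "\<dots> = (\<Sum>l\<in>{0..m}. \<Sum>v\<in>{0..<l}. ?d l * X l * ?p v)"
      by (rule sum.nested_swap[symmetric])
    finally show ?thesis
      by (simp add: sum_distrib_left atLeast0LessThan)
  qed
  \<comment> \<open>This is where the choice of \<open>level_prob\<close> enters: the Myerson bound collapses to
      the win probability at every level except \<open>0\<close>.\<close>
  have termwise: "?p l * ?h l * X l + ?d l * X l * (\<Sum>v<l. ?p v) = ?p l * X l - (if l = 0 then ?p 0 * X 0 else 0)"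
    if "l \<in> {0..m}" for l
  proof (cases "l = 0")
    case False
    then have "?d l * (\<Sum>v<l. ?p v) = ?p l * decay m ^ l"
      using that m by (intro level_gap_mult_sum_level_prob) auto
    then show ?thesis
      using False by (simp add: cost_level_def algebra_simps)
  qed (simp add: cost_level_def)
  have "(\<Sum>v\<in>{0..m}. ?p v * X v) - ?p 0 \<le> (\<Sum>v\<in>{0..m}. ?p v * X v) - ?p 0 * X 0"
    using assms(2) level_prob_nonneg[OF m] by (simp add: mult_left_le)
  also have "\<dots> = (\<Sum>l\<in>{0..m}. ?p l * ?h l * X l + ?d l * X l * (\<Sum>v<l. ?p v))"
    by (simp add: termwise sum_subtractf)
  also have "\<dots> = (\<Sum>v\<in>{0..m}. ?p v * (?h v * X v + (\<Sum>l\<in>{Suc v..m}. ?d l * X l)))"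
    by (simp only: distrib_left sum.distrib swap mult.assoc)
  also have "\<dots> \<le> (\<Sum>v\<in>{0..m}. ?p v * P v)"
    using level_prob_nonneg[OF m] payment_ge_cost_level_ladder[OF top adjacent]
    by (intro sum_mono mult_left_mono) auto
  finally show ?thesis .
qed

definition win_prob_real :: "outcome pmf \<Rightarrow> nat \<Rightarrow> real" where
  "win_prob_real D i = measure_pmf.prob D {\<omega>. i \<in> fst \<omega>}"

text \<open>\<open>enn2real\<close> sends \<open>\<infinity>\<close> to \<open>0\<close>; budget feasibility excludes infinite expected payments
(\<open>exp_pay_eq_ennreal\<close>).\<close>

definition exp_pay_real :: "outcome pmf \<Rightarrow> nat \<Rightarrow> real" where
  "exp_pay_real D i = enn2real (exp_pay D i)"

lemma win_prob_eq_ennreal: "win_prob D i = ennreal (win_prob_real D i)"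
  unfolding win_prob_def win_prob_real_def by (simp add: measure_pmf.emeasure_eq_measure)

lemma exp_pay_real_nonneg: "0 \<le> exp_pay_real D i"
  unfolding exp_pay_real_def by simp

lemma win_prob_real_bounds: "0 \<le> win_prob_real D i" "win_prob_real D i \<le> 1"
  unfolding win_prob_real_def by auto

lemma exp_total_pay_eq_sum:
  assumes "finite S" "\<And>\<omega> i. \<omega> \<in> set_pmf D \<Longrightarrow> 0 \<le> snd \<omega> i"
  shows "exp_total_pay D S = (\<Sum>i\<in>S. exp_pay D i)"
proof -
  have "exp_total_pay D S = (\<integral>\<^sup>+ \<omega>. (\<Sum>i\<in>S. ennreal (snd \<omega> i)) \<partial>measure_pmf D)"
    unfolding exp_total_pay_def using assms
    by (intro nn_integral_cong_AE) (auto simp: AE_measure_pmf_iff intro: sum_ennreal[symmetric])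
  then show ?thesis
    unfolding exp_pay_def by (simp add: nn_integral_sum)
qed

lemma exp_pay_eq_ennreal:
  assumes "finite S" "\<And>\<omega> i. \<omega> \<in> set_pmf D \<Longrightarrow> 0 \<le> snd \<omega> i"
    and "exp_total_pay D S \<le> ennreal B" "i \<in> S"
  shows "exp_pay D i = ennreal (exp_pay_real D i)"
proof -
  have "exp_pay D i \<le> (\<Sum>i\<in>S. exp_pay D i)"
    using assms by (intro member_le_sum) auto
  also have "\<dots> \<le> ennreal B"
    using assms exp_total_pay_eq_sum by metis
  finally have "exp_pay D i < \<infinity>"
    by (simp add: le_less_trans)
  then show ?thesis
    unfolding exp_pay_real_def by (simp add: ennreal_enn2real_if)
qed

lemma sum_exp_pay_real_le:
  assumes "finite S" "\<And>\<omega> i. \<omega> \<in> set_pmf D \<Longrightarrow> 0 \<le> snd \<omega> i"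
    and "exp_total_pay D S \<le> ennreal B" "0 \<le> B"
  shows "(\<Sum>i\<in>S. exp_pay_real D i) \<le> B"
proof -
  have "ennreal (\<Sum>i\<in>S. exp_pay_real D i) = (\<Sum>i\<in>S. exp_pay D i)"
    using exp_pay_eq_ennreal[OF assms(1-3)]
    by (simp add: exp_pay_real_def sum_ennreal[symmetric])
  also have "\<dots> \<le> ennreal B"
    using assms exp_total_pay_eq_sum by metis
  finally show ?thesis using assms(4) by (simp add: ennreal_le_iff)
qed

lemma exp_utility_unit_eq:
  assumes "finite S" "\<And>\<omega>. \<omega> \<in> set_pmf D \<Longrightarrow> fst \<omega> \<subseteq> S"
  shows "exp_utility D (\<lambda>_. 1) = ennreal (\<Sum>i\<in>S. win_prob_real D i)"
proof -
  have "exp_utility D (\<lambda>_. 1) = (\<integral>\<^sup>+ \<omega>. (\<Sum>i\<in>S. indicator {\<omega>. i \<in> fst \<omega>} \<omega>) \<partial>measure_pmf D)"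
    unfolding exp_utility_def
  proof (intro nn_integral_cong_AE, unfold AE_measure_pmf_iff, intro ballI)
    fix \<omega> assume "\<omega> \<in> set_pmf D"
    then have "S \<inter> fst \<omega> = fst \<omega>" using assms(2) by blast
    then have "(\<Sum>i\<in>S. indicator {\<omega>. i \<in> fst \<omega>} \<omega> :: ennreal) = of_nat (card (fst \<omega>))"
      using assms(1) by (simp add: indicator_def sum.If_cases)
    then show "ennreal (\<Sum>i\<in>fst \<omega>. 1) = (\<Sum>i\<in>S. indicator {\<omega>. i \<in> fst \<omega>} \<omega>)"
      by (simp add: ennreal_of_nat_eq_real_of_nat)
  qed
  also have "\<dots> = (\<Sum>i\<in>S. ennreal (win_prob_real D i))"
    by (simp add: nn_integral_sum win_prob_eq_ennreal[unfolded win_prob_def])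
  also have "\<dots> = ennreal (\<Sum>i\<in>S. win_prob_real D i)"
    by (simp add: sum_ennreal win_prob_real_bounds)
  finally show ?thesis .
qed

lemma well_formedD:
  assumes "well_formed M" "valid_instance B S u c" "\<omega> \<in> set_pmf (M B S u c)"
  shows "fst \<omega> \<subseteq> S" "0 \<le> snd \<omega> i"
  using assms unfolding well_formed_def by blast+

lemma exp_pay_eq_ennreal_mechanism:
  assumes "well_formed M" "budget_feasible_in_expectation M" "valid_instance B S u c" "i \<in> S"
  shows "exp_pay (M B S u c) i = ennreal (exp_pay_real (M B S u c) i)"
  using assms well_formedD[OF assms(1,3)]
  by (intro exp_pay_eq_ennreal[where S=S and B=B])
     (auto simp: valid_instance_def budget_feasible_in_expectation_def)

lemma budget_feasible_real:
  assumes "well_formed M" "budget_feasible_in_expectation M" "valid_instance B S u c"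
  shows "(\<Sum>i\<in>S. exp_pay_real (M B S u c) i) \<le> B"
  using assms well_formedD[OF assms(1,3)]
  by (intro sum_exp_pay_real_le) (auto simp: valid_instance_def budget_feasible_in_expectation_def)

lemma individually_rational_real:
  assumes "well_formed M" "individually_rational M" "budget_feasible_in_expectation M"
    and "valid_instance B S u c" "i \<in> S"
  shows "c i * win_prob_real (M B S u c) i \<le> exp_pay_real (M B S u c) i"
proof -
  have "c i \<ge> 0" using assms(4,5) by (simp add: valid_instance_def)
  have "ennreal (c i) * win_prob (M B S u c) i \<le> exp_pay (M B S u c) i"
    using assms(2,4,5) unfolding individually_rational_def by blast
  then have "ennreal (c i * win_prob_real (M B S u c) i) \<le> ennreal (exp_pay_real (M B S u c) i)"
    using \<open>c i \<ge> 0\<close> exp_pay_eq_ennreal_mechanism[OF assms(1,3-5)]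
    by (simp add: win_prob_eq_ennreal ennreal_mult')
  then show ?thesis by (simp add: ennreal_le_iff exp_pay_real_nonneg)
qed

lemma truthful_real:
  assumes "well_formed M" "truthful_in_expectation M" "budget_feasible_in_expectation M"
    and "valid_instance B S u c" "i \<in> S" "0 \<le> cb"
  shows "exp_pay_real (M B S u (c(i := cb))) i + c i * win_prob_real (M B S u c) i
       \<le> exp_pay_real (M B S u c) i + c i * win_prob_real (M B S u (c(i := cb))) i"
    (is "?lhs \<le> ?rhs")
proof -
  have valid': "valid_instance B S u (c(i := cb))"
    using assms(4,6) by (simp add: valid_instance_def)
  have "c i \<ge> 0" using assms(4,5) by (simp add: valid_instance_def)
  have "exp_pay (M B S u (c(i := cb))) i + ennreal (c i) * win_prob (M B S u c) i
      \<le> exp_pay (M B S u c) i + ennreal (c i) * win_prob (M B S u (c(i := cb))) i"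
    using assms(2,4-6) unfolding truthful_in_expectation_def by blast
  then have "ennreal ?lhs \<le> ennreal ?rhs"
    using \<open>c i \<ge> 0\<close> exp_pay_eq_ennreal_mechanism[OF assms(1,3) _ assms(5)] assms(4) valid'
    by (simp add: win_prob_eq_ennreal ennreal_mult' ennreal_plus exp_pay_real_nonneg
        win_prob_real_bounds)
  moreover have "0 \<le> ?rhs"
    using \<open>c i \<ge> 0\<close> by (simp add: exp_pay_real_nonneg win_prob_real_bounds)
  ultimately show ?thesis by (simp add: ennreal_le_iff)
qed

lemma sum_le_opt_utility:
  assumes "finite S" "T \<subseteq> S" "sum c T \<le> B"
  shows "sum u T \<le> opt_utility B S u c"
proof -
  have "finite {T. T \<subseteq> S \<and> sum c T \<le> B}"
    using assms(1) by (rule finite_subset[rotated, OF finite_Pow_iff[THEN iffD2]]) auto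
  then have "finite {(\<Sum>i\<in>T. u i) | T. T \<subseteq> S \<and> (\<Sum>i\<in>T. c i) \<le> B}"
    by (simp add: setcompr_eq_image)
  then show ?thesis
    unfolding opt_utility_def using assms by (intro Max_ge) auto
qed

text \<open>If the total cost exceeds the budget, its deviation from the mean is at least
\<open>card S * \<delta>\<close>; this is the pointwise form of Chebyshev's inequality.\<close>

lemma opt_utility_unit_ge:
  fixes \<delta> \<mu> B :: real
  assumes "finite S" "S \<noteq> {}" "0 < \<delta>" "0 \<le> B" "B = card S * (\<mu> + \<delta>)"
  shows "card S - (\<Sum>i\<in>S. c i - \<mu>)\<^sup>2 / (card S * \<delta>\<^sup>2) \<le> opt_utility B S (\<lambda>_. 1) c"
proof (cases "sum c S \<le> B")
  case True
  then have "card S \<le> opt_utility B S (\<lambda>_. 1) c"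
    using sum_le_opt_utility[OF assms(1) subset_refl, of c B "\<lambda>_. 1"] by simp
  moreover have "0 \<le> (\<Sum>i\<in>S. c i - \<mu>)\<^sup>2 / (card S * \<delta>\<^sup>2)"
    by simp
  ultimately show ?thesis by linarith
next
  case False
  let ?n = "real (card S)"
  have n: "0 < ?n" using assms(1,2) by (simp add: card_gt_0_iff)
  have "?n * \<delta> < (\<Sum>i\<in>S. c i - \<mu>)"
    using False assms(5) by (simp add: sum_subtractf algebra_simps)
  then have "(?n * \<delta>)\<^sup>2 < (\<Sum>i\<in>S. c i - \<mu>)\<^sup>2"
    using n assms(3) by (intro power_strict_mono) auto
  then have "?n < (\<Sum>i\<in>S. c i - \<mu>)\<^sup>2 / (?n * \<delta>\<^sup>2)"
    using n assms(3) by (simp add: field_simps power2_eq_square)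
  moreover have "0 \<le> opt_utility B S (\<lambda>_. 1) c"
    using sum_le_opt_utility[of S "{}" c B "\<lambda>_. 1"] assms(1,4) by simp
  ultimately show ?thesis by linarith
qed

lemma expected_opt_utility_ge:
  assumes m: "m \<ge> 1" and S: "finite S" "S \<noteq> {}" and "0 < \<delta>"
    and B: "B = card S * ((\<Sum>v\<in>{0..m}. level_prob m v * cost_level m v) + \<delta>)"
  shows "card S - 1 / \<delta>\<^sup>2
       \<le> pi_expect (level_prob m) S {0..m} (\<lambda>g. opt_utility B S (\<lambda>_. 1) (cost_level m \<circ> g))"
proof -
  let ?n = "real (card S)" and ?E = "pi_expect (level_prob m) S {0..m}"
  define \<mu> where "\<mu> = (\<Sum>v\<in>{0..m}. level_prob m v * cost_level m v)"
  define V where "V g = (\<Sum>i\<in>S. cost_level m (g i) - \<mu>)\<^sup>2" for g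
  have n: "0 < ?n" using S by (simp add: card_gt_0_iff)
  have "0 \<le> \<mu>" "\<mu> \<le> (\<Sum>v\<in>{0..m}. level_prob m v)"
    unfolding \<mu>_def using level_prob_nonneg[OF m] cost_level_bounds[OF m]
    by (auto intro!: sum_nonneg sum_mono simp: mult_left_le)
  then have dev: "\<bar>cost_level m v - \<mu>\<bar> \<le> 1" for v
    using cost_level_bounds[OF m, of v] sum_level_prob[OF m] by linarith
  have "?E V \<le> ?n"
    unfolding V_def using dev level_prob_nonneg[OF m] sum_level_prob[OF m] S(1) \<mu>_def
    by (intro pi_expect_sum_deviation_sq_le) auto
  then have "?n - 1 / \<delta>\<^sup>2 \<le> ?n + (- 1 / (?n * \<delta>\<^sup>2)) * ?E V"
    using n \<open>0 < \<delta>\<close> by (simp add: field_simps)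
  also have "\<dots> = ?E (\<lambda>g. ?n + (- 1 / (?n * \<delta>\<^sup>2)) * V g)"
    by (rule pi_expect_affine[symmetric, OF S(1) finite_atLeastAtMost sum_level_prob[OF m]])
  also have "\<dots> \<le> ?E (\<lambda>g. opt_utility B S (\<lambda>_. 1) (cost_level m \<circ> g))"
  proof (rule pi_expect_mono[OF level_prob_nonneg[OF m]])
    fix g
    have "0 \<le> B" using \<open>0 \<le> \<mu>\<close> B \<open>0 < \<delta>\<close> by (simp add: \<mu>_def)
    with \<open>0 \<le> \<mu>\<close> show "?n + (- 1 / (?n * \<delta>\<^sup>2)) * V g \<le> opt_utility B S (\<lambda>_. 1) (cost_level m \<circ> g)"
      using opt_utility_unit_ge[OF S \<open>0 < \<delta>\<close>, of B \<mu> "cost_level m \<circ> g"] B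
      by (simp add: V_def \<mu>_def)
  qed
  finally show ?thesis .
qed

lemma valid_instance_cost_level:
  assumes "m \<ge> 1" "0 < B" "finite S" "\<forall>i\<in>S. 0 < u i"
  shows "valid_instance B S u (cost_level m \<circ> g)"
  using assms cost_level_bounds[OF assms(1)] by (simp add: valid_instance_def)

lemma expected_win_prob_le_expected_payment:
  assumes mech: "well_formed M" "individually_rational M" "truthful_in_expectation M"
      "budget_feasible_in_expectation M"
    and m: "m \<ge> 1" and inst: "0 < B" "finite S" "\<forall>i\<in>S. 0 < u i" and i: "i \<in> S"
  shows "pi_expect (level_prob m) S {0..m} (\<lambda>g. win_prob_real (M B S u (cost_level m \<circ> g)) i)
         - level_prob m 0
       \<le> pi_expect (level_prob m) S {0..m} (\<lambda>g. exp_pay_real (M B S u (cost_level m \<circ> g)) i)"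
proof -
  let ?X = "\<lambda>g. win_prob_real (M B S u (cost_level m \<circ> g)) i"
  let ?P = "\<lambda>g. exp_pay_real (M B S u (cost_level m \<circ> g)) i"
  let ?E = "pi_expect (level_prob m) (S - {i}) {0..m}"
  have valid: "valid_instance B S u (cost_level m \<circ> g)" for g
    by (rule valid_instance_cost_level[OF m inst])
  have seller: "(\<Sum>v\<in>{0..m}. level_prob m v * ?X (g(i := v))) - level_prob m 0
      \<le> (\<Sum>v\<in>{0..m}. level_prob m v * ?P (g(i := v)))" for g
  proof (rule expected_payment_ge_expected_win[OF m])
    show "?X (g(i := 0)) \<le> 1" by (rule win_prob_real_bounds)
    show "cost_level m m * ?X (g(i := m)) \<le> ?P (g(i := m))"
      using individually_rational_real[OF mech(1,2,4) valid[of "g(i := m)"] i] by simp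
    fix j
    have "(cost_level m \<circ> g(i := j))(i := cost_level m (Suc j)) = cost_level m \<circ> g(i := Suc j)"
      by (simp add: fun_eq_iff)
    then show "?P (g(i := Suc j)) + cost_level m j * ?X (g(i := j))
        \<le> ?P (g(i := j)) + cost_level m j * ?X (g(i := Suc j))"
      using truthful_real[OF mech(1,3,4) valid i, of "cost_level m (Suc j)" "g(i := j)"]
        cost_level_bounds[OF m] by simp
  qed
  have "pi_expect (level_prob m) S {0..m} ?X - level_prob m 0
      = ?E (\<lambda>g. (\<Sum>v\<in>{0..m}. level_prob m v * ?X (g(i := v))) - level_prob m 0)"
    using inst(2) sum_level_prob[OF m]
    by (simp add: pi_expect_remove[OF inst(2) i] pi_expect_diff_const)
  also have "\<dots> \<le> ?E (\<lambda>g. \<Sum>v\<in>{0..m}. level_prob m v * ?P (g(i := v)))"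
    using seller by (intro pi_expect_mono[OF level_prob_nonneg[OF m]]) simp
  also have "\<dots> = pi_expect (level_prob m) S {0..m} ?P"
    by (simp add: pi_expect_remove[OF inst(2) i])
  finally show ?thesis .
qed

lemma expected_total_win_prob_le:
  assumes mech: "well_formed M" "individually_rational M" "truthful_in_expectation M"
      "budget_feasible_in_expectation M"
    and m: "m \<ge> 1" and inst: "0 < B" "finite S" "\<forall>i\<in>S. 0 < u i"
  shows "pi_expect (level_prob m) S {0..m} (\<lambda>g. \<Sum>i\<in>S. win_prob_real (M B S u (cost_level m \<circ> g)) i)
       \<le> B + card S * level_prob m 0"
proof -
  let ?E = "pi_expect (level_prob m) S {0..m}"
  have "?E (\<lambda>g. \<Sum>i\<in>S. win_prob_real (M B S u (cost_level m \<circ> g)) i)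
      \<le> (\<Sum>i\<in>S. ?E (\<lambda>g. exp_pay_real (M B S u (cost_level m \<circ> g)) i) + level_prob m 0)"
    unfolding pi_expect_sum
    using expected_win_prob_le_expected_payment[OF mech m inst]
    by (intro sum_mono) (simp add: algebra_simps)
  also have "\<dots> = ?E (\<lambda>g. \<Sum>i\<in>S. exp_pay_real (M B S u (cost_level m \<circ> g)) i) + card S * level_prob m 0"
    by (simp add: pi_expect_sum sum.distrib)
  also have "\<dots> \<le> ?E (\<lambda>_. B) + card S * level_prob m 0"
    using budget_feasible_real[OF mech(1,4) valid_instance_cost_level[OF m inst]]
    by (intro add_right_mono pi_expect_mono[OF level_prob_nonneg[OF m]])
  also have "\<dots> = B + card S * level_prob m 0"
    using inst(2) sum_level_prob[OF m] by (simp add: pi_expect_const)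
  finally show ?thesis .
qed

lemma c_max_cost_level_le_one:
  assumes "m \<ge> 1" "finite S" "S \<noteq> {}"
  shows "c_max S (cost_level m \<circ> g) \<le> 1"
  using assms cost_level_bounds[OF assms(1)] by (simp add: c_max_def)

lemma large_market_guarantee_on_cost_levels:
  fixes \<delta> \<theta> :: real
  assumes "well_formed M" and m: "m \<ge> 1" and "0 < \<delta>" "0 < \<theta>" and S: "finite S" "S \<noteq> {}"
    and B: "B = card S * (1 - 2 * decay m ^ m + \<delta>)" and "1 \<le> \<theta> * (card S * \<delta>)"
    and guarantee: "\<forall>B S u c. valid_instance B S u c \<longrightarrow> S \<noteq> {} \<longrightarrow> c_max S c / B \<le> \<theta> \<longrightarrow>
          exp_utility (M B S u c) u \<ge> ennreal (\<alpha> * opt_utility B S u c)"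
  shows "\<alpha> * opt_utility B S (\<lambda>_. 1) (cost_level m \<circ> g)
       \<le> (\<Sum>i\<in>S. win_prob_real (M B S (\<lambda>_. 1) (cost_level m \<circ> g)) i)"
proof -
  have "card S * \<delta> \<le> B"
    using two_decay_power_le_one[OF m] by (simp add: B mult_left_mono)
  then have "1 \<le> \<theta> * B"
    using \<open>1 \<le> \<theta> * (card S * \<delta>)\<close> \<open>0 < \<theta>\<close> mult_left_mono[of "card S * \<delta>" B \<theta>] by linarith
  have "0 < card S * \<delta>"
    using S \<open>0 < \<delta>\<close> by (simp add: card_gt_0_iff)
  then have "0 < B"
    using \<open>card S * \<delta> \<le> B\<close> by linarith
  have valid: "valid_instance B S (\<lambda>_. 1) (cost_level m \<circ> g)"
    using valid_instance_cost_level[OF m \<open>0 < B\<close> S(1)] by simp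
  have "c_max S (cost_level m \<circ> g) \<le> \<theta> * B"
    using c_max_cost_level_le_one[OF m S, of g] \<open>1 \<le> \<theta> * B\<close> by linarith
  then have "c_max S (cost_level m \<circ> g) / B \<le> \<theta>"
    using \<open>0 < B\<close> by (simp add: divide_le_eq mult_ac)
  then have "ennreal (\<alpha> * opt_utility B S (\<lambda>_. 1) (cost_level m \<circ> g))
      \<le> exp_utility (M B S (\<lambda>_. 1) (cost_level m \<circ> g)) (\<lambda>_. 1)"
    using guarantee valid S(2) by blast
  also have "\<dots> = ennreal (\<Sum>i\<in>S. win_prob_real (M B S (\<lambda>_. 1) (cost_level m \<circ> g)) i)"
    using valid by (intro exp_utility_unit_eq[OF S(1)] well_formedD(1)[OF \<open>well_formed M\<close>])
  finally show ?thesis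
    by (simp add: ennreal_le_iff sum_nonneg win_prob_real_bounds)
qed

lemma approximation_ratio_on_cost_level_instances:
  assumes mech: "well_formed M" "individually_rational M" "truthful_in_expectation M"
      "budget_feasible_in_expectation M"
    and m: "m \<ge> 1" and "0 < \<delta>" "0 \<le> \<alpha>" and S: "finite S" "S \<noteq> {}"
    and B: "B = card S * (1 - 2 * decay m ^ m + \<delta>)"
    and guarantee: "\<And>g. \<alpha> * opt_utility B S (\<lambda>_. 1) (cost_level m \<circ> g)
                        \<le> (\<Sum>i\<in>S. win_prob_real (M B S (\<lambda>_. 1) (cost_level m \<circ> g)) i)"
  shows "\<alpha> * (card S - 1 / \<delta>\<^sup>2) \<le> card S * (1 - decay m ^ m + \<delta>)"
proof -
  let ?E = "pi_expect (level_prob m) S {0..m}"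
  let ?W = "\<lambda>g. \<Sum>i\<in>S. win_prob_real (M B S (\<lambda>_. 1) (cost_level m \<circ> g)) i"
  have "0 < B"
    using B S \<open>0 < \<delta>\<close> two_decay_power_le_one[OF m] by (simp add: card_gt_0_iff)
  have "\<alpha> * (card S - 1 / \<delta>\<^sup>2) \<le> \<alpha> * ?E (\<lambda>g. opt_utility B S (\<lambda>_. 1) (cost_level m \<circ> g))"
    using expected_opt_utility_ge[OF m S \<open>0 < \<delta>\<close>] B expected_cost_level[OF m] \<open>0 \<le> \<alpha>\<close>
    by (intro mult_left_mono) auto
  also have "\<dots> = ?E (\<lambda>g. 0 + \<alpha> * opt_utility B S (\<lambda>_. 1) (cost_level m \<circ> g))"
    using pi_expect_affine[OF S(1) finite_atLeastAtMost sum_level_prob[OF m], of 0 \<alpha>] by simp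
  also have "\<dots> \<le> ?E ?W"
    using guarantee by (intro pi_expect_mono[OF level_prob_nonneg[OF m]]) simp
  also have "\<dots> \<le> B + card S * level_prob m 0"
    using expected_total_win_prob_le[OF mech m \<open>0 < B\<close> S(1)] by simp
  finally show ?thesis
    using B by (simp add: level_prob_def algebra_simps)
qed

theorem theorem2:
  shows "\<not> (\<exists>(M::mechanism) (\<alpha>::real) (\<theta>\<^sub>0::real).
            well_formed M \<and> individually_rational M \<and> truthful_in_expectation M
          \<and> budget_feasible_in_expectation M
          \<and> \<alpha> > 1 - 1 / exp 1 \<and> \<theta>\<^sub>0 > 0
          \<and> (\<forall>B S u c. valid_instance B S u c \<longrightarrow> S \<noteq> {} \<longrightarrow> c_max S c / B \<le> \<theta>\<^sub>0 \<longrightarrow>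
                exp_utility (M B S u c) u \<ge> ennreal (\<alpha> * opt_utility B S u c)))"
proof (intro notI, elim exE conjE)
  fix M :: mechanism and \<alpha> \<theta>\<^sub>0 :: real
  assume mech: "well_formed M" "individually_rational M" "truthful_in_expectation M"
      "budget_feasible_in_expectation M"
    and \<alpha>: "\<alpha> > 1 - 1 / exp 1" and "\<theta>\<^sub>0 > 0"
    and guarantee: "\<forall>B S u c. valid_instance B S u c \<longrightarrow> S \<noteq> {} \<longrightarrow> c_max S c / B \<le> \<theta>\<^sub>0 \<longrightarrow>
                exp_utility (M B S u c) u \<ge> ennreal (\<alpha> * opt_utility B S u c)"
  obtain m where m: "m \<ge> 1" "1 - \<alpha> < decay m ^ m"
    using exists_decay_power_gt[of "1 - \<alpha>"] \<alpha> by (auto simp: exp_minus field_simps)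
  define \<delta> where "\<delta> = (\<alpha> - (1 - decay m ^ m)) / 2"
  have "0 < \<delta>" "0 \<le> \<alpha>" using m two_decay_power_le_one[OF m(1)] by (auto simp: \<delta>_def)
  obtain n :: nat where n: "\<alpha> / \<delta> ^ 3 < n" "1 / (\<theta>\<^sub>0 * \<delta>) < n"
    using reals_Archimedean2[of "max (\<alpha> / \<delta> ^ 3) (1 / (\<theta>\<^sub>0 * \<delta>))"] by auto
  have "1 < \<theta>\<^sub>0 * (n * \<delta>)"
    using n(2) \<open>0 < \<delta>\<close> \<open>0 < \<theta>\<^sub>0\<close> by (simp add: divide_less_eq mult_ac)
  then have "n \<noteq> 0"
    by (intro notI) simp
  then have S: "finite {..<n}" "{..<n} \<noteq> {}" "card {..<n} = n"
    by auto
  define B where "B = card {..<n} * (1 - 2 * decay m ^ m + \<delta>)"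
  have "\<alpha> * (n - 1 / \<delta>\<^sup>2) \<le> n * (1 - decay m ^ m + \<delta>)"
    using approximation_ratio_on_cost_level_instances[OF mech m(1) \<open>0 < \<delta>\<close> \<open>0 \<le> \<alpha>\<close> S(1,2) B_def
        large_market_guarantee_on_cost_levels[OF mech(1) m(1) \<open>0 < \<delta>\<close> \<open>0 < \<theta>\<^sub>0\<close> S(1,2) B_def _ guarantee]]
      \<open>1 < \<theta>\<^sub>0 * (n * \<delta>)\<close>
    by (simp add: S(3))
  also have "1 - decay m ^ m + \<delta> = \<alpha> - \<delta>"
    by (simp add: \<delta>_def field_simps)
  finally have "n * \<delta> \<le> \<alpha> / \<delta>\<^sup>2"
    by (simp add: algebra_simps)
  then have "n * \<delta> ^ 3 \<le> \<alpha>"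
    using \<open>0 < \<delta>\<close> by (simp add: pos_le_divide_eq power2_eq_square power3_eq_cube mult_ac)
  then show False
    using n(1) \<open>0 < \<delta>\<close> by (simp add: pos_divide_less_eq)
qed

end
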